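(* Let $\operatorname{char}(k)\ne2$. For every term $\lambda$ over $X$, there exist $\alpha_i\in k$ and GDN supertableaux $\lambda_i$ over $X$ with $\ell(\lambda_i)=\ell(\lambda)$ and $r(\lambda_i)\ge r(\lambda)$ such that $\lambda=\sum_i\alpha_i\lambda_i$ in $\mathrm{GDN}_s(X)$. In particular $\mathrm{Tab}_s(X)$ spans $\mathrm{GDN}_s(X)$.
   Context: A GDN superalgebra is a superalgebra $\mathcal A=\mathcal A_0\oplus\mathcal A_1$ over a field $k$ (product $\circ$, $\mathcal A_i\circ\mathcal A_j\subseteq\mathcal A_{i+j}$ mod 2, $|x|=i$ for nonzero $x\in\mathcal A_i$) satisfying for homogeneous $x,y,z$: $x\circ(y\circ z)-(x\circ y)\circ z=(-1)^{|x||y|}(y\circ(x\circ z)-(y\circ x)\circ z)$ and $(x\circ y)\circ z=(-1)^{|y||z|}(x\circ z)\circ y$. $X=X_0\sqcup X_1$ is well-ordered, elements of $X_i$ have parity $i$, and $\mathrm{GDN}_s(X)$ is the free GDN superalgebra on $X$. Terms over $X$: letters of $X$ and products $(\mu\circ\nu)$ of terms, regarded as elements of $\mathrm{GDN}_s(X)$; length $\ell$ is the number of letters. $[\mu_1,\dots,\mu_n]_L=((\cdots(\mu_1\circ\mu_2)\cdots)\circ\mu_n)$, $[\mu_1,\dots,\mu_n]_R=(\mu_1\circ(\cdots\circ(\mu_{n-1}\circ\mu_n)\cdots))$; a simple term is $[a_1,\dots,a_n]_R$ with $a_i\in X$, $n\ge1$. Root number: $r(a)=0$ ($a\in X$), $r((\mu\circ\nu))=r(\mu)+1$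 if $\nu\in X$, else $r(\mu)+r(\nu)$. A GDN supertableau over $X$ is a term $\mu=[a,\mu_1,\dots,\mu_n]_L$ with $a\in X$, $n\ge0$, simple terms $\mu_i=[a_{i,r_i},\dots,a_{i,1}]_R$ of length $r_i\ge1$, such that: (i) $r_1\ge\dots\ge r_n$; (ii) if $r_i=r_{i+1}$ then $a_{i,1}\ge a_{i+1,1}$; (iii) $a\ge a_{1,r_1}\ge\dots\ge a_{1,2}\ge a_{2,r_2}\ge\dots\ge a_{2,2}\ge\dots\ge a_{n,r_n}\ge\dots\ge a_{n,2}$; (iv) among the letters of the chain in (iii), any two in different positions that both lie in $X_1$ are distinct; (v) if $a_{i,1},a_{i+1,1}\in X_1$ and $r_i=r_{i+1}$ then $a_{i,1}\ne a_{i+1,1}$. $\mathrm{Tab}_s(X)$ is the set of all GDN supertableaux. *)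

theory Defs
  imports Main
begin

text \<open>Terms over the alphabet X (type 'x, well-ordered). The parity of letters is
given by a function par :: 'x => bool (True means the letter lies in X_1).\<close>

datatype 'x gterm = Letter 'x | Mul "'x gterm" "'x gterm"

fun tlen :: "'x gterm \<Rightarrow> nat" where
  "tlen (Letter a) = 1"
| "tlen (Mul u v) = tlen u + tlen v"

fun tpar :: "('x \<Rightarrow> bool) \<Rightarrow> 'x gterm \<Rightarrow> bool" where
  "tpar par (Letter a) = par a"
| "tpar par (Mul u v) = (tpar par u \<noteq> tpar par v)"

fun root :: "'x gterm \<Rightarrow> nat" where
  "root (Letter a) = 0"
| "root (Mul u (Letter b)) = root u + 1"
| "root (Mul u (Mul v w)) = root u + root (Mul v w)"

definition sgn2 :: "('x \<Rightarrow> bool) \<Rightarrow> 'x gterm \<Rightarrow> 'x gterm \<Rightarrow> 'k::comm_ring_1" where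
  "sgn2 par x y = (if tpar par x \<and> tpar par y then -1 else 1)"

text \<open>Elements of the free nonassociative superalgebra are represented by finite
formal linear combinations (lists of coefficient/term pairs).  The ideal of
relations defining GDN_s(X) is the two-sided ideal generated by all instances of
the two super-identities on terms (terms are homogeneous monomials, and the
identities are multilinear, so this is the full T-ideal of GDN superalgebras).\<close>

definition lc_coeff :: "('k::comm_ring_1 \<times> 'x gterm) list \<Rightarrow> 'x gterm \<Rightarrow> 'k" where
  "lc_coeff L t = sum_list (map fst (filter (\<lambda>p. snd p = t) L))"

inductive gdn_rel :: "('x \<Rightarrow> bool) \<Rightarrow> ('k::comm_ring_1 \<times> 'x gterm) list \<Rightarrow> bool"
  for par :: "'x \<Rightarrow> bool" where
  ident1: "gdn_rel par
     [(1, Mul x (Mul y z)), (-1, Mul (Mul x y) z),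
      (- sgn2 par x y, Mul y (Mul x z)), (sgn2 par x y, Mul (Mul y x) z)]"
| ident2: "gdn_rel par [(1, Mul (Mul x y) z), (- sgn2 par y z, Mul (Mul x z) y)]"
| zero: "gdn_rel par []"
| add: "gdn_rel par a \<Longrightarrow> gdn_rel par b \<Longrightarrow> gdn_rel par (a @ b)"
| smult: "gdn_rel par a \<Longrightarrow> gdn_rel par (map (\<lambda>(c, t). (\<alpha> * c, t)) a)"
| mult_left: "gdn_rel par a \<Longrightarrow> gdn_rel par (map (\<lambda>(c, t). (c, Mul u t)) a)"
| mult_right: "gdn_rel par a \<Longrightarrow> gdn_rel par (map (\<lambda>(c, t). (c, Mul t u)) a)"
| cong: "gdn_rel par a \<Longrightarrow> (\<And>t. lc_coeff a t = lc_coeff b t) \<Longrightarrow> gdn_rel par b"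

definition gdn_eq :: "('x \<Rightarrow> bool) \<Rightarrow> ('k::comm_ring_1 \<times> 'x gterm) list
    \<Rightarrow> ('k \<times> 'x gterm) list \<Rightarrow> bool" where
  "gdn_eq par a b = gdn_rel par (a @ map (\<lambda>(c, t). (- c, t)) b)"

fun rnest :: "'x list \<Rightarrow> 'x gterm" where
  "rnest [b] = Letter b"
| "rnest (b # c # cs) = Mul (Letter b) (rnest (c # cs))"

definition lnest :: "'x \<Rightarrow> 'x gterm list \<Rightarrow> 'x gterm" where
  "lnest a mus = foldl Mul (Letter a) mus"

text \<open>The simple term mu_i = [a_{i,r_i},...,a_{i,1}]_R is encoded
by the list ws ! i = [a_{i,r_i},...,a_{i,1}] (written order), so r_i = length (ws!i),
a_{i,1} = last (ws!i), and a_{i,r_i},...,a_{i,2} is butlast (ws!i).\<close>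
definition is_tableau :: "('x::linorder \<Rightarrow> bool) \<Rightarrow> 'x gterm \<Rightarrow> bool" where
  "is_tableau par t \<longleftrightarrow> (\<exists>a ws.
     t = lnest a (map rnest ws) \<and>
     (\<forall>i < length ws. ws ! i \<noteq> []) \<and>
     (\<forall>i. Suc i < length ws \<longrightarrow> length (ws ! i) \<ge> length (ws ! Suc i)) \<and>
     (\<forall>i. Suc i < length ws \<longrightarrow> length (ws ! i) = length (ws ! Suc i) \<longrightarrow>
            last (ws ! i) \<ge> last (ws ! Suc i)) \<and>
     (let c = a # concat (map butlast ws) in
        (\<forall>j. Suc j < length c \<longrightarrow> c ! j \<ge> c ! Suc j) \<and>
        (\<forall>i j. i < length c \<longrightarrow> j < length c \<longrightarrow> i \<noteq> j \<longrightarrow> par (c ! i) \<longrightarrow> par (c ! j)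
               \<longrightarrow> c ! i \<noteq> c ! j)) \<and>
     (\<forall>i. Suc i < length ws \<longrightarrow> par (last (ws ! i)) \<longrightarrow> par (last (ws ! Suc i)) \<longrightarrow>
            length (ws ! i) = length (ws ! Suc i) \<longrightarrow> last (ws ! i) \<noteq> last (ws ! Suc i)))"

definition Tab :: "('x::linorder \<Rightarrow> bool) \<Rightarrow> 'x gterm set" where
  "Tab par = {t. is_tableau par t}"

end

theory Submission
  imports Defs "HOL-Library.Product_Lexorder" "HOL-Combinatorics.Permutations"
begin

text \<open>
  Modulo the GDN identities every term is a combination of terms $[a, \mu_1, \dots, \mu_n]_L$ with
  simple $\mu_i$: the second identity lets the $\mu_i$ supercommute, and the first one moves brackets
  into the left-normed spine. In such a term the first identity also swaps two neighbouring letters of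
  a row, or $a$ with the first letter of a row, up to sign and up to terms of the same length and
  larger root number. Hence the chain letters ($a$ and all but the last letter of each row) may be
  permuted at will modulo those terms. Sorting rows and chain then either produces a supertableau or
  shows an odd letter twice, in the chain or as the common last letter of two rows of equal length;
  in the latter cases the term is congruent to its own negative, so it vanishes modulo higher terms
  because $\mathrm{char}\,k \neq 2$. The induction runs over the length and, for a fixed length,
  downwards over the root number.
\<close>

lemma sum_length_mset_eq: "mset ws = mset ws' \<Longrightarrow> (\<Sum>w\<leftarrow>ws. length w) = (\<Sum>w\<leftarrow>ws'. length w)"
  by (metis mset_map sum_mset_sum_list)

lemma count_ge_2_if_nth_eq:
  assumes "i < j" "j < length xs" "xs ! i = xs ! j"
  shows "2 \<le> count (mset xs) (xs ! j)"
proof -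
  have "count (mset xs) (xs ! j)
      = count (mset (take j xs)) (xs ! j) + Suc (count (mset (drop (Suc j) xs)) (xs ! j))"
    by (subst (1) id_take_nth_drop[OF assms(2)]) simp
  moreover have "take j xs ! i = xs ! j" "i < length (take j xs)"
    using assms by simp_all
  then have "0 < count (mset (take j xs)) (xs ! j)"
    by (metis count_greater_zero_iff nth_mem set_mset_mset)
  ultimately show ?thesis by linarith
qed

lemma nth_neq_if_count_less_2:
  assumes "count (mset xs) (xs ! i) < 2" "i < length xs" "j < length xs" "i \<noteq> j"
  shows "xs ! i \<noteq> xs ! j"
proof (cases "i < j")
  case True
  then show ?thesis using assms count_ge_2_if_nth_eq[of i j xs] by auto
next
  case False
  then show ?thesis using assms count_ge_2_if_nth_eq[of j i xs] by auto
qed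

definition list_swap :: "'a list \<Rightarrow> nat \<Rightarrow> nat \<Rightarrow> 'a list" where
  "list_swap xs i j = xs[i := xs ! j, j := xs ! i]"

lemma length_list_swap [simp]: "length (list_swap xs i j) = length xs"
  by (simp add: list_swap_def)

lemma permute_list_transpose:
  "i < length xs \<Longrightarrow> j < length xs \<Longrightarrow> permute_list (Transposition.transpose i j) xs = list_swap xs i j"
  by (rule nth_equalityI) (auto simp: permute_list_def list_swap_def nth_list_update transpose_def)

lemma swap_closed_rel_permute_list:
  assumes swap: "\<And>xs i j. length xs = n \<Longrightarrow> i < n \<Longrightarrow> j < n \<Longrightarrow> R xs (list_swap xs i j)"
    and refl: "\<And>xs. R xs xs" and trans: "\<And>xs ys zs. R xs ys \<Longrightarrow> R ys zs \<Longrightarrow> R xs zs"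
    and "p permutes {..<n}"
  shows "length xs = n \<Longrightarrow> R xs (permute_list p xs)"
  using assms(4) finite_lessThan
proof (induction p arbitrary: xs rule: permutes_induct)
  case id
  then show ?case by (simp add: refl)
next
  case (swap i j p)
  have "permute_list (Transposition.transpose i j \<circ> p) xs = permute_list p (list_swap xs i j)"
    using swap by (simp add: permute_list_compose permute_list_transpose)
  then show ?case
    using swap assms(1) by (metis trans length_list_swap lessThan_iff)
qed

lemma swap_closed_rel_mset_eq:
  assumes "\<And>xs i j. length xs = length ys \<Longrightarrow> i < length ys \<Longrightarrow> j < length ys \<Longrightarrow> R xs (list_swap xs i j)"
    and "\<And>xs. R xs xs" and "\<And>xs ys zs. R xs ys \<Longrightarrow> R ys zs \<Longrightarrow> R xs zs"
    and "mset xs = mset ys"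
  shows "R xs ys"
proof -
  obtain p where "p permutes {..<length xs}" "permute_list p xs = ys"
    using mset_eq_permutation[OF assms(4)[symmetric]] .
  moreover have "length xs = length ys" using assms(4) by (rule mset_eq_length)
  ultimately show ?thesis
    using swap_closed_rel_permute_list[of "length ys" R p xs] assms(1-3) by auto
qed

lemma head_swaps_closed_rel:
  assumes head: "\<And>xs j. length xs = n \<Longrightarrow> 0 < j \<Longrightarrow> j < n \<Longrightarrow> R xs (list_swap xs 0 j)"
    and refl: "\<And>xs. R xs xs" and trans: "\<And>xs ys zs. R xs ys \<Longrightarrow> R ys zs \<Longrightarrow> R xs zs"
    and "length xs = n" "i < n" "j < n"
  shows "R xs (list_swap xs i j)"
proof -
  have sym: "list_swap xs i j = list_swap xs j i" for xs :: "'a list" and i j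
    by (cases "i = j") (auto simp: list_swap_def list_update_swap)
  consider "i = j" | "i = 0 \<or> j = 0" | "0 < i" "0 < j" "i \<noteq> j" by blast
  then show ?thesis
  proof cases
    case 1
    then show ?thesis by (simp add: list_swap_def refl)
  next
    case 2
    then show ?thesis using assms sym refl by (metis gr0I list_swap_def list_update_id)
  next
    case 3
    have "list_swap (list_swap (list_swap xs 0 i) 0 j) 0 i = list_swap xs i j"
      using 3 assms(4-6) by (intro nth_equalityI) (auto simp: list_swap_def nth_list_update)
    then show ?thesis
      using 3 assms by (metis trans length_list_swap)
  qed
qed

subsection \<open>Linear combinations and spans modulo the GDN relations\<close>

definition lc_uminus :: "('k::comm_ring_1 \<times> 'x gterm) list \<Rightarrow> ('k \<times> 'x gterm) list" where
  "lc_uminus L = map (\<lambda>(c, t). (- c, t)) L"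

definition lc_scale :: "'k::comm_ring_1 \<Rightarrow> ('k \<times> 'x gterm) list \<Rightarrow> ('k \<times> 'x gterm) list" where
  "lc_scale \<alpha> L = map (\<lambda>(c, t). (\<alpha> * c, t)) L"

definition lc_map :: "('x gterm \<Rightarrow> 'x gterm) \<Rightarrow> ('k \<times> 'x gterm) list \<Rightarrow> ('k \<times> 'x gterm) list" where
  "lc_map f L = map (\<lambda>(c, t). (c, f t)) L"

lemma lc_coeff_Nil [simp]: "lc_coeff [] t = 0"
  by (simp add: lc_coeff_def)

lemma lc_coeff_Cons [simp]: "lc_coeff ((c, u) # L) t = (if u = t then c else 0) + lc_coeff L t"
  by (simp add: lc_coeff_def)

lemma lc_coeff_append [simp]: "lc_coeff (L @ M) t = lc_coeff L t + lc_coeff M t"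
  by (simp add: lc_coeff_def)

lemma lc_uminus_simps [simp]:
  "lc_uminus [] = []" "lc_uminus ((c, t) # L) = (- c, t) # lc_uminus L"
  "lc_uminus (L @ M) = lc_uminus L @ lc_uminus M"
  by (simp_all add: lc_uminus_def)

lemma lc_scale_simps [simp]:
  "lc_scale \<alpha> [] = []" "lc_scale \<alpha> ((c, t) # L) = (\<alpha> * c, t) # lc_scale \<alpha> L"
  "lc_scale \<alpha> (L @ M) = lc_scale \<alpha> L @ lc_scale \<alpha> M"
  by (simp_all add: lc_scale_def)

lemma lc_map_simps [simp]:
  "lc_map f [] = []" "lc_map f ((c, t) # L) = (c, f t) # lc_map f L"
  "lc_map f (L @ M) = lc_map f L @ lc_map f M"
  by (simp_all add: lc_map_def)

lemma lc_coeff_uminus [simp]: "lc_coeff (lc_uminus L) t = - lc_coeff L t"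
  by (induction L) auto

lemma lc_coeff_scale [simp]: "lc_coeff (lc_scale \<alpha> L) t = \<alpha> * lc_coeff L t"
  by (induction L) (auto simp: algebra_simps)

lemma lc_map_uminus: "lc_map f (lc_uminus L) = lc_uminus (lc_map f L)"
  by (induction L) auto

lemma lc_map_comp: "lc_map f (lc_map g L) = lc_map (f \<circ> g) L"
  by (induction L) auto

lemma snd_set_lc_uminus: "snd ` set (lc_uminus L) = snd ` set L"
  by (simp add: lc_uminus_def image_comp case_prod_unfold comp_def)

lemma snd_set_lc_scale: "snd ` set (lc_scale \<alpha> L) = snd ` set L"
  by (simp add: lc_scale_def image_comp case_prod_unfold comp_def)

lemma snd_set_lc_map: "snd ` set (lc_map f L) = f ` snd ` set L"
  by (simp add: lc_map_def image_comp case_prod_unfold comp_def)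

lemma gdn_rel_scale: "gdn_rel par L \<Longrightarrow> gdn_rel par (lc_scale \<alpha> L)"
  unfolding lc_scale_def by (rule gdn_rel.smult)

inductive mul_ctx :: "('x gterm \<Rightarrow> 'x gterm) \<Rightarrow> bool" where
  mul_ctx_id: "mul_ctx (\<lambda>t. t)"
| mul_ctx_left: "mul_ctx f \<Longrightarrow> mul_ctx (\<lambda>t. Mul u (f t))"
| mul_ctx_right: "mul_ctx f \<Longrightarrow> mul_ctx (\<lambda>t. Mul (f t) u)"

lemma mul_ctx_comp: "mul_ctx f \<Longrightarrow> mul_ctx g \<Longrightarrow> mul_ctx (\<lambda>t. f (g t))"
  by (induction f rule: mul_ctx.induct) (auto intro: mul_ctx.intros)

lemma mul_ctx_foldl: "mul_ctx f \<Longrightarrow> mul_ctx (\<lambda>t. foldl Mul (f t) us)"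
  by (induction us arbitrary: f) (auto intro: mul_ctx.intros)

lemma gdn_rel_ctx: "mul_ctx f \<Longrightarrow> gdn_rel par L \<Longrightarrow> gdn_rel par (lc_map f L)"
proof (induction f arbitrary: L rule: mul_ctx.induct)
  case mul_ctx_id
  then show ?case by (simp add: lc_map_def)
next
  case (mul_ctx_left f u)
  then have "gdn_rel par (lc_map (Mul u) (lc_map f L))"
    unfolding lc_map_def[of "Mul u"] by (intro gdn_rel.mult_left) auto
  then show ?case by (simp add: lc_map_comp o_def)
next
  case (mul_ctx_right f u)
  then have "gdn_rel par (lc_map (\<lambda>t. Mul t u) (lc_map f L))"
    unfolding lc_map_def[of "\<lambda>t. Mul t u"] by (intro gdn_rel.mult_right) auto
  then show ?case by (simp add: lc_map_comp o_def)
qed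

lemma gdn_eq_iff: "gdn_eq par L M = gdn_rel par (L @ lc_uminus M)"
  by (simp add: gdn_eq_def lc_uminus_def)

lemma gdn_eq_coeffI: "(\<And>t. lc_coeff L t = lc_coeff M t) \<Longrightarrow> gdn_eq par L M"
  unfolding gdn_eq_iff by (rule gdn_rel.cong[OF gdn_rel.zero]) simp

lemma gdn_eq_refl [simp]: "gdn_eq par L L"
  by (rule gdn_eq_coeffI) simp

lemma gdn_eq_trans: "gdn_eq par L M \<Longrightarrow> gdn_eq par M K \<Longrightarrow> gdn_eq par L K"
  unfolding gdn_eq_iff by (rule gdn_rel.cong[OF gdn_rel.add[of par "L @ lc_uminus M" "M @ lc_uminus K"]]) auto

lemma gdn_eq_append: "gdn_eq par L M \<Longrightarrow> gdn_eq par L' M' \<Longrightarrow> gdn_eq par (L @ L') (M @ M')"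
  unfolding gdn_eq_iff by (rule gdn_rel.cong[OF gdn_rel.add[of par "L @ lc_uminus M" "L' @ lc_uminus M'"]]) auto

lemma gdn_eq_scale: "gdn_eq par L M \<Longrightarrow> gdn_eq par (lc_scale \<alpha> L) (lc_scale \<alpha> M)"
  unfolding gdn_eq_iff
  by (rule gdn_rel.cong[OF gdn_rel_scale[of par "L @ lc_uminus M" \<alpha>]]) (auto simp: algebra_simps)

lemma gdn_eq_ctx: "mul_ctx f \<Longrightarrow> gdn_eq par L M \<Longrightarrow> gdn_eq par (lc_map f L) (lc_map f M)"
  unfolding gdn_eq_iff using gdn_rel_ctx[of f par "L @ lc_uminus M"] by (simp add: lc_map_uminus)

definition in_span :: "('x \<Rightarrow> bool) \<Rightarrow> 'x gterm set \<Rightarrow> ('k::comm_ring_1 \<times> 'x gterm) list \<Rightarrow> bool" where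
  "in_span par S L \<longleftrightarrow> (\<exists>M. snd ` set M \<subseteq> S \<and> gdn_eq par L M)"

lemma in_span_Nil [simp]: "in_span par S []"
  unfolding in_span_def by (rule exI[of _ "[]"]) simp

lemma in_span_base: "t \<in> S \<Longrightarrow> in_span par S [(c, t)]"
  unfolding in_span_def by (rule exI[of _ "[(c, t)]"]) simp

lemma in_span_gdn_eq: "gdn_eq par L M \<Longrightarrow> in_span par S M \<Longrightarrow> in_span par S L"
  unfolding in_span_def by (blast intro: gdn_eq_trans)

lemma in_span_coeff: "(\<And>t. lc_coeff L t = lc_coeff M t) \<Longrightarrow> in_span par S M \<Longrightarrow> in_span par S L"
  by (rule in_span_gdn_eq[OF gdn_eq_coeffI])

lemma in_span_append:
  assumes "in_span par S L" "in_span par S M"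
  shows "in_span par S (L @ M)"
proof -
  obtain L' M' where "snd ` set L' \<subseteq> S" "gdn_eq par L L'" "snd ` set M' \<subseteq> S" "gdn_eq par M M'"
    using assms unfolding in_span_def by blast
  then show ?thesis
    unfolding in_span_def by (intro exI[of _ "L' @ M'"]) (auto intro: gdn_eq_append)
qed

lemma in_span_scale: "in_span par S L \<Longrightarrow> in_span par S (lc_scale \<alpha> L)"
  unfolding in_span_def by (metis gdn_eq_scale snd_set_lc_scale)

lemma in_span_Cons: "in_span par S [(c, t)] \<Longrightarrow> in_span par S L \<Longrightarrow> in_span par S ((c, t) # L)"
  using in_span_append[of par S "[(c, t)]" L] by simp

lemma in_span_single:
  fixes c :: "'k::comm_ring_1"
  shows "in_span par S [(1::'k, t)] \<Longrightarrow> in_span par S [(c, t)]"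
  by (rule in_span_coeff[OF _ in_span_scale[where \<alpha> = c and L = "[(1::'k, t)]"]]) auto

lemma in_span_mono: "in_span par S L \<Longrightarrow> S \<subseteq> T \<Longrightarrow> in_span par T L"
  unfolding in_span_def by blast

lemma in_span_combination:
  fixes L :: "('k::comm_ring_1 \<times> 'x gterm) list"
  assumes "\<And>t. t \<in> snd ` set L \<Longrightarrow> in_span par T [(1::'k, t)]"
  shows "in_span par T L"
  using assms
proof (induction L)
  case (Cons p L)
  then show ?case by (cases p) (auto intro: in_span_Cons in_span_single)
qed simp

lemma in_span_trans:
  fixes L :: "('k::comm_ring_1 \<times> 'x gterm) list"
  assumes "in_span par S L" "\<And>t. t \<in> S \<Longrightarrow> in_span par T [(1::'k, t)]"
  shows "in_span par T L"
proof -
  obtain M where "snd ` set M \<subseteq> S" "gdn_eq par L M"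
    using assms(1) unfolding in_span_def by blast
  moreover have "in_span par T M"
    by (rule in_span_combination) (use calculation(1) assms(2) in auto)
  ultimately show ?thesis by (blast intro: in_span_gdn_eq)
qed

lemma in_span_ctx:
  fixes t :: "'x gterm"
  assumes "mul_ctx f" "in_span par S [(1::'k::comm_ring_1, t)]"
    and "\<And>u. u \<in> S \<Longrightarrow> in_span par T [(1::'k, f u)]"
  shows "in_span par T [(1::'k, f t)]"
proof -
  obtain M where M: "snd ` set M \<subseteq> S" "gdn_eq par [(1::'k, t)] M"
    using assms(2) unfolding in_span_def by blast
  have "gdn_eq par [(1::'k, f t)] (lc_map f M)"
    using gdn_eq_ctx[OF assms(1) M(2)] by simp
  moreover have "in_span par T (lc_map f M)"
  proof (rule in_span_combination)
    fix u assume "u \<in> snd ` set (lc_map f M)"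
    then obtain v where "v \<in> snd ` set M" "u = f v"
      by (auto simp: snd_set_lc_map)
    then show "in_span par T [(1::'k, u)]" using M(1) assms(3) by blast
  qed
  ultimately show ?thesis by (rule in_span_gdn_eq)
qed

lemma in_span_solve:
  fixes c :: "'k::field"
  assumes "gdn_rel par ((c, t) # R)" "c \<noteq> 0" "in_span par S R"
  shows "in_span par S [(1::'k, t)]"
proof -
  have "gdn_rel par (lc_scale (inverse c) ((c, t) # R))"
    by (rule gdn_rel_scale[OF assms(1)])
  then have "gdn_eq par [(1::'k, t)] (lc_scale (- inverse c) R)"
    unfolding gdn_eq_iff by (rule gdn_rel.cong) (use assms(2) in \<open>auto simp: algebra_simps\<close>)
  then show ?thesis using in_span_scale[OF assms(3)] by (rule in_span_gdn_eq)
qed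

definition cong_mod :: "('x \<Rightarrow> bool) \<Rightarrow> 'x gterm set \<Rightarrow> 'x gterm \<Rightarrow> 'k::comm_ring_1 \<Rightarrow> 'x gterm \<Rightarrow> bool" where
  "cong_mod par S t c t' \<longleftrightarrow> in_span par S [(1, t), (- c, t')]"

lemma cong_mod_refl: "cong_mod par S t (1::'k::comm_ring_1) t"
  unfolding cong_mod_def by (rule in_span_coeff[OF _ in_span_Nil]) auto

lemma cong_mod_trans:
  fixes c :: "'k::comm_ring_1"
  assumes "cong_mod par S t c t'" "cong_mod par S t' d t''"
  shows "cong_mod par S t (c * d) t''"
proof -
  have "in_span par S ([(1, t), (- c, t')] @ lc_scale c [(1, t'), (- d, t'')])"
    using assms unfolding cong_mod_def by (intro in_span_append in_span_scale)
  then show ?thesis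
    unfolding cong_mod_def by (rule in_span_coeff[rotated]) auto
qed

lemma cong_mod_sym:
  fixes c :: "'k::comm_ring_1"
  assumes "cong_mod par S t c t'" "c * c = 1"
  shows "cong_mod par S t' c t"
proof -
  have "in_span par S (lc_scale (- c) [(1, t), (- c, t')])"
    using assms(1) unfolding cong_mod_def by (rule in_span_scale)
  then show ?thesis
    unfolding cong_mod_def by (rule in_span_coeff[rotated]) (use assms(2) in \<open>auto simp: algebra_simps\<close>)
qed

lemma cong_mod_in_span:
  fixes c :: "'k::comm_ring_1"
  assumes "cong_mod par S t c t'" "in_span par T [(1::'k, t')]" "S \<subseteq> T"
  shows "in_span par T [(1::'k, t)]"
proof -
  have "in_span par T ([(1, t), (- c, t')] @ [(c, t')])"
    using assms unfolding cong_mod_def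
    by (intro in_span_append) (auto intro: in_span_mono in_span_single)
  then show ?thesis by (rule in_span_coeff[rotated]) auto
qed

text \<open>This is the only place where $\mathrm{char}\,k \neq 2$ is used.\<close>

lemma cong_mod_neg_self_in_span:
  fixes t :: "'x gterm"
  assumes "cong_mod par S t (-1::'k::field) t" "(2::'k) \<noteq> 0"
  shows "in_span par S [(1::'k, t)]"
proof -
  have "in_span par S (lc_scale (inverse 2) [(1::'k, t), (1, t)])"
    using assms(1) unfolding cong_mod_def by (intro in_span_scale) simp
  then show ?thesis
    by (rule in_span_coeff[rotated]) (use assms(2) in \<open>auto simp: field_simps\<close>)
qed

lemma cong_mod_of_rel:
  fixes c :: "'k::comm_ring_1"
  assumes "gdn_rel par L" "\<And>u. lc_coeff L u = lc_coeff ((1, t) # (- c, t') # R) u"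
    and "snd ` set R \<subseteq> S"
  shows "cong_mod par S t c t'"
proof -
  have "gdn_eq par [(1, t), (- c, t')] (lc_uminus R)"
    unfolding gdn_eq_iff by (rule gdn_rel.cong[OF assms(1)]) (simp add: assms(2))
  moreover have "in_span par S (lc_uminus R)"
    unfolding in_span_def using assms(3) by (metis gdn_eq_refl snd_set_lc_uminus)
  ultimately show ?thesis
    unfolding cong_mod_def by (rule in_span_gdn_eq)
qed

definition parity_sign :: "bool \<Rightarrow> 'k::comm_ring_1" where
  "parity_sign b = (if b then -1 else 1)"

lemma parity_sign_simps [simp]:
  "parity_sign False = 1" "parity_sign True = -1"
  by (simp_all add: parity_sign_def)

lemma parity_sign_mult: "parity_sign a * parity_sign b = (parity_sign (a \<noteq> b) :: 'k::comm_ring_1)"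
  by (simp add: parity_sign_def)

lemma parity_sign_mult_self: "parity_sign b * parity_sign b = (1 :: 'k::comm_ring_1)"
  by (simp add: parity_sign_def)

lemma sgn2_parity_sign: "sgn2 par x y = parity_sign (tpar par x \<and> tpar par y)"
  by (simp add: sgn2_def parity_sign_def)

text \<open>The type argument only fixes the ring in which the sign lives.\<close>

definition cong_pm :: "('x \<Rightarrow> bool) \<Rightarrow> 'x gterm set \<Rightarrow> 'x gterm \<Rightarrow> 'x gterm \<Rightarrow> 'k::comm_ring_1 itself \<Rightarrow> bool" where
  "cong_pm par S t t' K \<longleftrightarrow> (\<exists>b. cong_mod par S t (parity_sign b :: 'k) t')"

lemma cong_pmI: "cong_mod par S t (parity_sign b :: 'k::comm_ring_1) t' \<Longrightarrow> cong_pm par S t t' TYPE('k)"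
  unfolding cong_pm_def by blast

lemma cong_pm_refl: "cong_pm par S t t TYPE('k::comm_ring_1)"
  unfolding cong_pm_def by (metis cong_mod_refl parity_sign_simps(1))

lemma cong_pm_trans:
  "cong_pm par S t t' TYPE('k::comm_ring_1) \<Longrightarrow> cong_pm par S t' t'' TYPE('k) \<Longrightarrow> cong_pm par S t t'' TYPE('k)"
  unfolding cong_pm_def by (metis cong_mod_trans parity_sign_mult)

lemma cong_pm_in_span:
  "cong_pm par S t t' TYPE('k::comm_ring_1) \<Longrightarrow> in_span par T [(1::'k, t')] \<Longrightarrow> S \<subseteq> T
    \<Longrightarrow> in_span par T [(1::'k, t)]"
  unfolding cong_pm_def using cong_mod_in_span by blast

lemma root_Mul_ge1: "root (Mul u v) \<ge> 1"
proof (induction v arbitrary: u)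
  case (Mul v1 v2)
  have "1 \<le> root (Mul v1 v2)" by (rule Mul.IH(2))
  then show ?case by simp
qed simp

lemma root_Mul: "root (Mul u v) = root u + max 1 (root v)"
proof (cases v)
  case (Mul x y)
  then show ?thesis using root_Mul_ge1[of x y] by (simp add: max_def)
qed simp

lemma tlen_pos: "tlen t > 0"
  by (induction t) auto

lemma root_less_tlen: "root t < tlen t"
proof (induction t)
  case (Mul u v)
  then show ?case using tlen_pos[of v] by (simp add: root_Mul)
qed simp

lemma tlen_rnest: "w \<noteq> [] \<Longrightarrow> tlen (rnest w) = length w"
  by (induction w rule: rnest.induct) auto

lemma root_rnest_le1: "w \<noteq> [] \<Longrightarrow> root (rnest w) \<le> 1"
proof (induction w rule: rnest.induct)
  case (2 b c cs)
  then show ?case by (cases cs) (auto simp: root_Mul)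
qed auto

fun list_par :: "('x \<Rightarrow> bool) \<Rightarrow> 'x list \<Rightarrow> bool" where
  "list_par par [] = False"
| "list_par par (x # xs) = (par x \<noteq> list_par par xs)"

lemma list_par_append [simp]: "list_par par (xs @ ys) = (list_par par xs \<noteq> list_par par ys)"
  by (induction xs) auto

lemma rnest_Cons: "w \<noteq> [] \<Longrightarrow> rnest (b # w) = Mul (Letter b) (rnest w)"
  by (cases w) auto

lemma tpar_rnest: "w \<noteq> [] \<Longrightarrow> tpar par (rnest w) = list_par par w"
  by (induction w rule: rnest.induct) auto

definition tab_term :: "'x \<Rightarrow> 'x list list \<Rightarrow> 'x gterm" where
  "tab_term a ws = lnest a (map rnest ws)"

lemma tab_term_Nil: "tab_term a [] = Letter a"
  by (simp add: tab_term_def lnest_def)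

lemma tab_term_snoc: "tab_term a (ws @ [w]) = Mul (tab_term a ws) (rnest w)"
  by (simp add: tab_term_def lnest_def)

lemma root_Mul_rnest: "w \<noteq> [] \<Longrightarrow> root (Mul u (rnest w)) = Suc (root u)"
  using root_rnest_le1[of w] by (simp add: root_Mul max_def)

lemma root_foldl_rnest: "[] \<notin> set ws \<Longrightarrow> root (foldl Mul u (map rnest ws)) = root u + length ws"
  by (induction ws arbitrary: u) (auto simp: root_Mul_rnest)

lemma tlen_foldl_rnest:
  "[] \<notin> set ws \<Longrightarrow> tlen (foldl Mul u (map rnest ws)) = tlen u + (\<Sum>w\<leftarrow>ws. length w)"
  by (induction ws arbitrary: u) (auto simp: tlen_rnest)

lemma root_tab_term: "[] \<notin> set ws \<Longrightarrow> root (tab_term a ws) = length ws"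
  by (simp add: tab_term_def lnest_def root_foldl_rnest)

lemma tlen_tab_term: "[] \<notin> set ws \<Longrightarrow> tlen (tab_term a ws) = Suc (\<Sum>w\<leftarrow>ws. length w)"
  by (simp add: tab_term_def lnest_def tlen_foldl_rnest)

lemma tlen_tab_term_eq:
  assumes "[] \<notin> set ws" "[] \<notin> set ws'" "(\<Sum>w\<leftarrow>ws. length w) = (\<Sum>w\<leftarrow>ws'. length w)"
  shows "tlen (tab_term a ws) = tlen (tab_term b ws')"
  using assms by (simp add: tlen_tab_term)

definition row_prefix :: "'x list \<Rightarrow> 'x gterm \<Rightarrow> 'x gterm" where
  "row_prefix P t = foldr (\<lambda>p t. Mul (Letter p) t) P t"

lemma rnest_append: "w \<noteq> [] \<Longrightarrow> rnest (P @ w) = row_prefix P (rnest w)"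
proof (induction P)
  case (Cons p P)
  then show ?case by (cases "P @ w") (auto simp: row_prefix_def)
qed (simp add: row_prefix_def)

lemma mul_ctx_row_prefix: "mul_ctx (row_prefix P)"
  by (induction P) (auto simp: row_prefix_def intro: mul_ctx.intros)

lemma root_row_prefix: "root t \<ge> 1 \<Longrightarrow> root (row_prefix P t) = root t"
  by (induction P) (auto simp: row_prefix_def root_Mul)

lemma tlen_row_prefix: "tlen (row_prefix P t) = length P + tlen t"
  by (induction P) (auto simp: row_prefix_def)

lemma mul_ctx_slot: "mul_ctx (\<lambda>m. foldl Mul x (A @ m # B))"
  using mul_ctx_foldl[OF mul_ctx_left[OF mul_ctx_id, of "foldl Mul x A"], of B] by simp

subsection \<open>Rewriting tableau-shaped terms modulo terms of larger root number\<close>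

text \<open>Tableau-shaped terms of length \<open>N\<close> with \<open>r\<close> rows (hence of root number \<open>r\<close>) are rewritten
  modulo the span of the terms of length \<open>N\<close> and larger root number; these are handled by the
  outer induction.\<close>

definition higher_terms :: "nat \<Rightarrow> nat \<Rightarrow> 'x gterm set" where
  "higher_terms N r = {u. tlen u = N \<and> r < root u}"

lemma tab_term_swap_rows:
  assumes "v \<noteq> []" "w \<noteq> []"
  shows "cong_mod par S (tab_term a (A @ v # w # B))
           (parity_sign (list_par par v \<and> list_par par w) :: 'k::comm_ring_1) (tab_term a (A @ w # v # B))"
proof -
  let ?x = "foldl Mul (Letter a) (map rnest A)"
  have "gdn_rel par [(1::'k, Mul (Mul ?x (rnest v)) (rnest w)), (- sgn2 par (rnest v) (rnest w), Mul (Mul ?x (rnest w)) (rnest v))]"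
    by (rule gdn_rel.ident2)
  from gdn_rel_ctx[OF mul_ctx_foldl[OF mul_ctx_id, of "map rnest B"] this] show ?thesis
    using assms by (intro cong_mod_of_rel[where R = "[]"]) (auto simp: tab_term_def lnest_def sgn2_parity_sign tpar_rnest)
qed

lemma tab_term_swap_head:
  assumes "[] \<notin> set ws" "s \<noteq> []"
    and "N = tlen (tab_term a ((b # s) # ws))" "r = Suc (length ws)"
  shows "cong_mod par (higher_terms N r) (tab_term a ((b # s) # ws))
           (parity_sign (par a \<and> par b) :: 'k::comm_ring_1) (tab_term b ((a # s) # ws))"
proof -
  let ?f = "\<lambda>m. foldl Mul m (map rnest ws)" and ?z = "rnest s"
  let ?sg = "sgn2 par (Letter a) (Letter b) :: 'k"
  have "gdn_rel par [(1::'k, Mul (Letter a) (Mul (Letter b) ?z)), (-1, Mul (Mul (Letter a) (Letter b)) ?z),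
      (- ?sg, Mul (Letter b) (Mul (Letter a) ?z)), (?sg, Mul (Mul (Letter b) (Letter a)) ?z)]"
    by (rule gdn_rel.ident1)
  note rel = gdn_rel_ctx[OF mul_ctx_foldl[OF mul_ctx_id, of "map rnest ws"] this]
  have "?f (Mul (Mul (Letter x) (Letter y)) ?z) \<in> higher_terms N r" for x y
    using assms by (auto simp: higher_terms_def tlen_foldl_rnest tlen_tab_term root_foldl_rnest
        root_Mul_rnest tlen_rnest)
  then show ?thesis
    by (intro cong_mod_of_rel[OF rel, where R = "[(-1, ?f (Mul (Mul (Letter a) (Letter b)) ?z)),
          (?sg, ?f (Mul (Mul (Letter b) (Letter a)) ?z))]"])
      (use assms(2) in \<open>auto simp: tab_term_def lnest_def rnest_Cons sgn2_parity_sign\<close>)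
qed

lemma tab_term_swap_letters:
  assumes "[] \<notin> set A" "[] \<notin> set B" "s \<noteq> []"
    and "N = tlen (tab_term a (A @ (P @ x # y # s) # B))" "r = Suc (length A + length B)"
  shows "cong_mod par (higher_terms N r) (tab_term a (A @ (P @ x # y # s) # B))
           (parity_sign (par x \<and> par y) :: 'k::comm_ring_1) (tab_term a (A @ (P @ y # x # s) # B))"
proof -
  let ?f = "\<lambda>m. foldl Mul (Letter a) (map rnest A @ row_prefix P m # map rnest B)" and ?z = "rnest s"
  let ?sg = "sgn2 par (Letter x) (Letter y) :: 'k"
  have "gdn_rel par [(1::'k, Mul (Letter x) (Mul (Letter y) ?z)), (-1, Mul (Mul (Letter x) (Letter y)) ?z),
      (- ?sg, Mul (Letter y) (Mul (Letter x) ?z)), (?sg, Mul (Mul (Letter y) (Letter x)) ?z)]"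
    by (rule gdn_rel.ident1)
  note rel = gdn_rel_ctx[OF mul_ctx_comp[OF mul_ctx_slot mul_ctx_row_prefix] this]
  have rnest_row: "rnest (P @ u # v # s) = row_prefix P (Mul (Letter u) (Mul (Letter v) ?z))" for u v
    using assms(3) by (simp add: rnest_append rnest_Cons)
  have "root (row_prefix P (Mul (Mul (Letter u) (Letter v)) ?z)) = 2" for u v
    using assms(3) by (subst root_row_prefix) (auto simp: root_Mul_rnest)
  then have "?f (Mul (Mul (Letter u) (Letter v)) ?z) \<in> higher_terms N r" for u v
    using assms by (auto simp: higher_terms_def tlen_foldl_rnest tlen_tab_term root_foldl_rnest
        root_Mul tlen_rnest tlen_row_prefix)
  then show ?thesis
    by (intro cong_mod_of_rel[OF rel, where R = "[(-1, ?f (Mul (Mul (Letter x) (Letter y)) ?z)),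
          (?sg, ?f (Mul (Mul (Letter y) (Letter x)) ?z))]"])
      (auto simp: tab_term_def lnest_def rnest_row sgn2_parity_sign)
qed

lemma tab_term_move_letter:
  assumes "[] \<notin> set A" "[] \<notin> set B" "s \<noteq> []"
    and "N = tlen (tab_term a (A @ (X @ x # P @ s) # B))" "r = Suc (length A + length B)"
  shows "cong_mod par (higher_terms N r) (tab_term a (A @ (X @ x # P @ s) # B))
           (parity_sign (par x \<and> list_par par P) :: 'k::comm_ring_1) (tab_term a (A @ (X @ P @ x # s) # B))"
  using assms(4)
proof (induction P arbitrary: X)
  case Nil
  then show ?case by (simp add: cong_mod_refl)
next
  case (Cons p P)
  have swap: "cong_mod par (higher_terms N r) (tab_term a (A @ (X @ x # p # P @ s) # B))
      (parity_sign (par x \<and> par p) :: 'k) (tab_term a (A @ (X @ p # x # P @ s) # B))"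
    using assms Cons.prems by (intro tab_term_swap_letters) auto
  have "tlen (tab_term a (A @ ((X @ [p]) @ x # P @ s) # B)) = tlen (tab_term a (A @ (X @ x # p # P @ s) # B))"
    using assms(1,2) by (intro tlen_tab_term_eq) auto
  then have "cong_mod par (higher_terms N r) (tab_term a (A @ (X @ p # x # P @ s) # B))
      (parity_sign (par x \<and> list_par par P) :: 'k) (tab_term a (A @ (X @ p # P @ x # s) # B))"
    using Cons.IH[of "X @ [p]"] Cons.prems by simp
  from cong_mod_trans[OF swap this] show ?case
    by (simp add: parity_sign_mult) (auto simp: parity_sign_def)
qed

lemma tab_term_move_row:
  "[] \<notin> set (v # C) \<Longrightarrow> cong_pm par S (tab_term a (A @ v # C @ D)) (tab_term a (A @ C @ v # D)) TYPE('k::comm_ring_1)"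
proof (induction C arbitrary: A)
  case Nil
  then show ?case by (simp add: cong_pm_refl)
next
  case (Cons c C)
  have "cong_pm par S (tab_term a (A @ v # c # C @ D)) (tab_term a (A @ c # v # C @ D)) TYPE('k)"
    using tab_term_swap_rows[of v c par S a A "C @ D"] Cons.prems by (auto intro: cong_pmI)
  moreover have "cong_pm par S (tab_term a (A @ c # v # C @ D)) (tab_term a (A @ c # C @ v # D)) TYPE('k)"
    using Cons.IH[of "A @ [c]"] Cons.prems by simp
  ultimately show ?case by (auto intro: cong_pm_trans)
qed

lemma tab_term_perm_rows:
  assumes "[] \<notin> set B" "mset B = mset B'"
  shows "cong_pm par S (tab_term a (A @ B)) (tab_term a (A @ B')) TYPE('k::comm_ring_1)"
  using assms
proof (induction B arbitrary: A B')
  case Nil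
  then show ?case by (simp add: cong_pm_refl)
next
  case (Cons v B)
  then have "v \<in> set B'" by (metis list.set_intros(1) set_mset_mset)
  then obtain C D where B': "B' = C @ v # D" by (meson split_list)
  with Cons.prems have "[] \<notin> set (v # C)" "mset B = mset (C @ D)"
    using mset_eq_setD[OF Cons.prems(2)] by auto
  then have "cong_pm par S (tab_term a (A @ v # B)) (tab_term a (A @ v # C @ D)) TYPE('k)"
    and "cong_pm par S (tab_term a (A @ v # C @ D)) (tab_term a (A @ C @ v # D)) TYPE('k)"
    using Cons.IH[of "C @ D" "A @ [v]"] Cons.prems by (auto intro: tab_term_move_row)
  then show ?case using B' by (auto intro: cong_pm_trans)
qed

lemma tab_term_perm_row_letters:
  assumes "[] \<notin> set A" "[] \<notin> set B" "s \<noteq> []" "r = Suc (length A + length B)"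
  shows "N = tlen (tab_term a (A @ (X @ P @ s) # B)) \<Longrightarrow> mset P = mset P'
    \<Longrightarrow> cong_pm par (higher_terms N r) (tab_term a (A @ (X @ P @ s) # B)) (tab_term a (A @ (X @ P' @ s) # B))
          TYPE('k::comm_ring_1)"
proof (induction P arbitrary: X P')
  case Nil
  then show ?case by (simp add: cong_pm_refl)
next
  case (Cons v P)
  then have "v \<in> set P'" by (metis list.set_intros(1) set_mset_mset)
  then obtain C D where P': "P' = C @ v # D" by (meson split_list)
  with Cons.prems have mset_P: "mset P = mset (C @ D)" by simp
  have first: "cong_pm par (higher_terms N r) (tab_term a (A @ (X @ v # P @ s) # B))
      (tab_term a (A @ (X @ v # C @ D @ s) # B)) TYPE('k)"
    using Cons.IH[of "X @ [v]" "C @ D"] Cons.prems mset_P by simp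
  have N_eq: "N = tlen (tab_term a (A @ (X @ v # C @ (D @ s)) # B))"
    unfolding Cons.prems(1) using assms(1,2) mset_eq_length[OF mset_P]
    by (intro tlen_tab_term_eq) auto
  have "cong_mod par (higher_terms N r) (tab_term a (A @ (X @ v # C @ (D @ s)) # B))
      (parity_sign (par v \<and> list_par par C) :: 'k) (tab_term a (A @ (X @ C @ v # (D @ s)) # B))"
    by (rule tab_term_move_letter[OF assms(1,2) _ N_eq assms(4)]) (use assms(3) in simp)
  then show ?case using cong_pm_trans[OF first cong_pmI] P' by simp
qed

lemma tab_term_swap_head_first_row:
  assumes "[] \<notin> set ws" "N = tlen (tab_term a ((P @ x # Q @ [l]) # ws))" "r = Suc (length ws)"
  shows "cong_pm par (higher_terms N r) (tab_term a ((P @ x # Q @ [l]) # ws))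
           (tab_term x ((P @ a # Q @ [l]) # ws)) TYPE('k::comm_ring_1)"
proof -
  have tlen_eq: "tlen (tab_term c (([] @ R @ [l]) # ws)) = N" if "length R = Suc (length P + length Q)" for c R
    unfolding assms(2) using assms(1) that by (intro tlen_tab_term_eq) auto
  have to_front: "cong_pm par (higher_terms N r) (tab_term a ([] @ ([] @ (P @ [x] @ Q) @ [l]) # ws))
      (tab_term a ([] @ ([] @ ([x] @ P @ Q) @ [l]) # ws)) TYPE('k)"
    by (rule tab_term_perm_row_letters) (use assms tlen_eq[where c = a and R = "P @ [x] @ Q"] in simp_all)
  have swap: "cong_pm par (higher_terms N r) (tab_term a ((x # P @ Q @ [l]) # ws))
      (tab_term x ((a # P @ Q @ [l]) # ws)) TYPE('k)"
    using tab_term_swap_head[of ws "P @ Q @ [l]" N a x r par] assms tlen_eq[where c = a and R = "x # P @ Q"]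
    by (auto intro: cong_pmI)
  have from_front: "cong_pm par (higher_terms N r) (tab_term x ([] @ ([] @ ([a] @ P @ Q) @ [l]) # ws))
      (tab_term x ([] @ ([] @ (P @ [a] @ Q) @ [l]) # ws)) TYPE('k)"
    by (rule tab_term_perm_row_letters) (use assms tlen_eq[where c = x and R = "a # P @ Q"] in simp_all)
  show ?thesis
    using cong_pm_trans[OF cong_pm_trans[OF to_front[simplified] swap] from_front[simplified]] by simp
qed

lemma tab_term_swap_head_chain:
  assumes "[] \<notin> set A" "[] \<notin> set B"
    and "N = tlen (tab_term a (A @ (P @ x # Q @ [l]) # B))" "r = Suc (length A + length B)"
  shows "cong_pm par (higher_terms N r) (tab_term a (A @ (P @ x # Q @ [l]) # B))
           (tab_term x (A @ (P @ a # Q @ [l]) # B)) TYPE('k::comm_ring_1)"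
proof -
  have tlen_eq: "N = tlen (tab_term a ([] @ (P @ x # Q @ [l]) # A @ B))"
    unfolding assms(3) using assms(1,2) by (intro tlen_tab_term_eq) auto
  have to_front: "cong_pm par (higher_terms N r) (tab_term a ([] @ A @ (P @ x # Q @ [l]) # B))
      (tab_term a ([] @ (P @ x # Q @ [l]) # A @ B)) TYPE('k)"
    by (rule tab_term_perm_rows) (use assms(1,2) in simp_all)
  have swap: "cong_pm par (higher_terms N r) (tab_term a ((P @ x # Q @ [l]) # A @ B))
      (tab_term x ((P @ a # Q @ [l]) # A @ B)) TYPE('k)"
    by (rule tab_term_swap_head_first_row) (use assms tlen_eq in simp_all)
  have from_front: "cong_pm par (higher_terms N r) (tab_term x ([] @ (P @ a # Q @ [l]) # A @ B))
      (tab_term x ([] @ A @ (P @ a # Q @ [l]) # B)) TYPE('k)"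
    by (rule tab_term_perm_rows) (use assms(1,2) in simp_all)
  show ?thesis
    using cong_pm_trans[OF cong_pm_trans[OF to_front[simplified] swap] from_front[simplified]] .
qed

subsection \<open>Permuting the chain of a tableau-shaped term\<close>

text \<open>The chain of \<open>tab_term a ws\<close> in the sense of condition (iii) of supertableaux is
  \<open>a # row_chain ws\<close>; \<open>chain_term c ws\<close> is the term with the row lengths and last letters of
  \<open>ws\<close> whose chain is \<open>c\<close>.\<close>

definition row_chain :: "'x list list \<Rightarrow> 'x list" where
  "row_chain ws = concat (map butlast ws)"

lemma row_chain_simps [simp]: "row_chain [] = []" "row_chain (w # ws) = butlast w @ row_chain ws"
  by (simp_all add: row_chain_def)

fun refill :: "'x list \<Rightarrow> 'x list list \<Rightarrow> 'x list list" where
  "refill cs [] = []"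
| "refill cs (w # ws) = (take (length w - 1) cs @ [last w]) # refill (drop (length w - 1) cs) ws"

lemma length_refill [simp]: "length (refill cs ws) = length ws"
  by (induction ws arbitrary: cs) auto

lemma refill_row_chain: "[] \<notin> set ws \<Longrightarrow> refill (row_chain ws) ws = ws"
  by (induction ws) auto

lemma refill_spec:
  "[] \<notin> set ws \<Longrightarrow> length cs = length (row_chain ws) \<Longrightarrow>
    row_chain (refill cs ws) = cs \<and> map length (refill cs ws) = map length ws
    \<and> map last (refill cs ws) = map last ws \<and> [] \<notin> set (refill cs ws)"
proof (induction ws arbitrary: cs)
  case (Cons w ws)
  have "length (butlast w) \<le> length cs" "length (drop (length w - 1) cs) = length (row_chain ws)"
    using Cons.prems by auto
  then show ?case using Cons by (auto simp: min_def)
qed simp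

lemma refill_update_split:
  assumes "[] \<notin> set ws" "length cs = length (row_chain ws)" "p < length cs"
  obtains A P Q l B where "\<And>z. refill (cs[p := z]) ws = A @ (P @ z # Q @ [l]) # B"
    and "Suc (length A + length B) = length ws"
  using assms
proof (induction ws arbitrary: cs p thesis)
  case Nil
  then show ?case by simp
next
  case (Cons w ws)
  let ?k = "length w - 1"
  show ?case
  proof (cases "p < ?k")
    case True
    have "length w - Suc p = Suc (length w - Suc (Suc p))" using True by simp
    then have "take ?k (cs[p := z]) = take p cs @ z # take (?k - Suc p) (drop (Suc p) cs)" for z
      using True Cons.prems(4) by (simp add: take_update_swap upd_conv_take_nth_drop drop_take)
    moreover have "drop ?k (cs[p := z]) = drop ?k cs" for z
      using True by simp
    ultimately have "refill (cs[p := z]) (w # ws)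
        = (take p cs @ z # take (?k - Suc p) (drop (Suc p) cs) @ [last w]) # refill (drop ?k cs) ws" for z
      by simp
    then show ?thesis
      by (intro Cons.prems(1)[where A = "[]" and P = "take p cs" and l = "last w"
            and Q = "take (?k - Suc p) (drop (Suc p) cs)" and B = "refill (drop ?k cs) ws"]) auto
  next
    case False
    have hyps: "[] \<notin> set ws" "length (drop ?k cs) = length (row_chain ws)" "p - ?k < length (drop ?k cs)"
      using Cons.prems False by auto
    obtain A P Q l B where "\<And>z. refill ((drop ?k cs)[p - ?k := z]) ws = A @ (P @ z # Q @ [l]) # B"
      and "Suc (length A + length B) = length ws"
      using Cons.IH[OF _ hyps] by blast
    then show ?thesis
      using False by (intro Cons.prems(1)[where A = "(take ?k cs @ [last w]) # A"]) (auto simp: drop_update_swap)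
  qed
qed

definition chain_term :: "'x list \<Rightarrow> 'x list list \<Rightarrow> 'x gterm" where
  "chain_term c ws = tab_term (hd c) (refill (tl c) ws)"

lemma chain_term_row_chain: "[] \<notin> set ws \<Longrightarrow> chain_term (a # row_chain ws) ws = tab_term a ws"
  by (simp add: chain_term_def refill_row_chain)

lemma tlen_chain_term:
  assumes "[] \<notin> set ws" "length c = Suc (length (row_chain ws))"
  shows "tlen (chain_term c ws) = tlen (tab_term x ws)"
proof -
  have "map length (refill (tl c) ws) = map length ws" "[] \<notin> set (refill (tl c) ws)"
    using refill_spec[of ws "tl c"] assms by auto
  then show ?thesis
    unfolding chain_term_def using assms(1) by (intro tlen_tab_term_eq) (auto dest: arg_cong[of _ _ sum_list])
qed

lemma chain_term_swap_head:
  assumes "[] \<notin> set ws" "length c = Suc (length (row_chain ws))" "0 < p" "p < length c"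
    and "N = tlen (tab_term x ws)" "r = length ws"
  shows "cong_pm par (higher_terms N r) (chain_term c ws) (chain_term (list_swap c 0 p) ws) TYPE('k::comm_ring_1)"
proof -
  obtain a cs where c: "c = a # cs" using assms(2) by (cases c) auto
  obtain q where p: "p = Suc q" using assms(3) by (cases p) auto
  have hyps: "length cs = length (row_chain ws)" "q < length cs" using assms(2,4) c p by auto
  obtain A P Q l B where split: "\<And>z. refill (cs[q := z]) ws = A @ (P @ z # Q @ [l]) # B"
    and len: "Suc (length A + length B) = length ws"
    using refill_update_split[OF assms(1) hyps] by blast
  have refill: "refill cs ws = A @ (P @ cs ! q # Q @ [l]) # B"
    using split[of "cs ! q"] by simp
  then have "[] \<notin> set A" "[] \<notin> set B"
    using refill_spec[OF assms(1) hyps(1)] by auto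
  moreover have "N = tlen (tab_term a (A @ (P @ cs ! q # Q @ [l]) # B))"
    using tlen_chain_term[OF assms(1,2), of x] assms(5) c refill by (simp add: chain_term_def)
  ultimately have "cong_pm par (higher_terms N r) (tab_term a (A @ (P @ cs ! q # Q @ [l]) # B))
      (tab_term (cs ! q) (A @ (P @ a # Q @ [l]) # B)) TYPE('k)"
    using len assms(6) by (intro tab_term_swap_head_chain) auto
  moreover have "list_swap c 0 p = cs ! q # cs[q := a]"
    by (simp add: list_swap_def c p)
  ultimately show ?thesis
    by (simp add: chain_term_def c refill split)
qed

lemma chain_term_perm:
  assumes "[] \<notin> set ws" "length c = Suc (length (row_chain ws))" "mset c = mset d"
    and "N = tlen (tab_term x ws)" "r = length ws"
  shows "cong_pm par (higher_terms N r) (chain_term c ws) (chain_term d ws) TYPE('k::comm_ring_1)"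
proof -
  let ?R = "\<lambda>c d. cong_pm par (higher_terms N r) (chain_term c ws) (chain_term d ws) TYPE('k)"
  have "length d = Suc (length (row_chain ws))"
    using assms(2,3) by (metis mset_eq_length)
  then have head: "?R xs (list_swap xs 0 j)" if "length xs = length d" "0 < j" "j < length d" for xs j
    using chain_term_swap_head[OF assms(1) _ that(2) _ assms(4,5)] that by simp
  have "?R xs (list_swap xs i j)" if "length xs = length d" "i < length d" "j < length d" for xs i j
    using head_swaps_closed_rel[where R = ?R, OF head cong_pm_refl cong_pm_trans that] by simp
  then show ?thesis
    by (rule swap_closed_rel_mset_eq[where R = ?R, OF _ cong_pm_refl cong_pm_trans assms(3)])
qed

definition exchange_sign :: "('x \<Rightarrow> bool) \<Rightarrow> 'x list \<Rightarrow> 'x list \<Rightarrow> 'x list \<Rightarrow> bool" where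
  "exchange_sign par P Q R \<longleftrightarrow>
     ((list_par par P \<and> list_par par R) \<noteq> (list_par par P \<and> list_par par Q)) \<noteq> (list_par par R \<and> list_par par Q)"

lemma tab_term_exchange_heads:
  assumes "[] \<notin> set ws" "\<rho> \<noteq> []" "\<sigma> \<noteq> []"
    and "N = tlen (tab_term a ((p # \<rho>) # (q # \<sigma>) # ws))" "r = Suc (Suc (length ws))"
  shows "cong_mod par (higher_terms N r) (tab_term a ((p # \<rho>) # (q # \<sigma>) # ws))
           (parity_sign (exchange_sign par [p] [q] \<rho>) :: 'k::comm_ring_1) (tab_term a ((q # \<rho>) # (p # \<sigma>) # ws))"
proof -
  have tlen_eq: "N = tlen (tab_term x ((y # \<rho>) # (z # \<sigma>) # ws))" "N = tlen (tab_term x ((y # \<sigma>) # (z # \<rho>) # ws))"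
    for x y z
    unfolding assms(4) using assms(1) by (intro tlen_tab_term_eq; auto)+
  have "cong_mod par (higher_terms N r) (tab_term a ((p # \<rho>) # (q # \<sigma>) # ws))
      (parity_sign (par a \<and> par p) :: 'k) (tab_term p ((a # \<rho>) # (q # \<sigma>) # ws))"
    using assms tlen_eq by (intro tab_term_swap_head) auto
  moreover have "cong_mod par (higher_terms N r) (tab_term p ([] @ (a # \<rho>) # (q # \<sigma>) # ws))
      (parity_sign (list_par par (a # \<rho>) \<and> list_par par (q # \<sigma>)) :: 'k) (tab_term p ([] @ (q # \<sigma>) # (a # \<rho>) # ws))"
    by (rule tab_term_swap_rows) simp_all
  moreover have "cong_mod par (higher_terms N r) (tab_term p ((q # \<sigma>) # (a # \<rho>) # ws))
      (parity_sign (par p \<and> par q) :: 'k) (tab_term q ((p # \<sigma>) # (a # \<rho>) # ws))"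
    using assms tlen_eq by (intro tab_term_swap_head) auto
  moreover have "cong_mod par (higher_terms N r) (tab_term q ([] @ (p # \<sigma>) # (a # \<rho>) # ws))
      (parity_sign (list_par par (p # \<sigma>) \<and> list_par par (a # \<rho>)) :: 'k) (tab_term q ([] @ (a # \<rho>) # (p # \<sigma>) # ws))"
    by (rule tab_term_swap_rows) simp_all
  moreover have "cong_mod par (higher_terms N r) (tab_term q ((a # \<rho>) # (p # \<sigma>) # ws))
      (parity_sign (par q \<and> par a) :: 'k) (tab_term a ((q # \<rho>) # (p # \<sigma>) # ws))"
    using assms tlen_eq by (intro tab_term_swap_head) auto
  ultimately have "cong_mod par (higher_terms N r) (tab_term a ((p # \<rho>) # (q # \<sigma>) # ws))
      (parity_sign (par a \<and> par p) * parity_sign (list_par par (a # \<rho>) \<and> list_par par (q # \<sigma>))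
        * parity_sign (par p \<and> par q) * parity_sign (list_par par (p # \<sigma>) \<and> list_par par (a # \<rho>))
        * parity_sign (par q \<and> par a) :: 'k) (tab_term a ((q # \<rho>) # (p # \<sigma>) # ws))"
    by (simp only: append_Nil) (rule cong_mod_trans)+
  then show ?thesis
    by (simp add: parity_sign_mult exchange_sign_def)
      (cases "par a"; cases "par p"; cases "par q"; cases "list_par par \<rho>"; cases "list_par par \<sigma>"; simp)
qed

lemma tab_term_move_first_letters:
  assumes "[] \<notin> set ws" "R1 \<noteq> []" "R2 \<noteq> []"
    and "N = tlen (tab_term a ((q # P @ R1) # (p # Q @ R2) # ws))" "r = Suc (Suc (length ws))"
  shows "cong_mod par (higher_terms N r) (tab_term a ((q # P @ R1) # (p # Q @ R2) # ws))
           (parity_sign ((par q \<and> list_par par P) \<noteq> (par p \<and> list_par par Q)) :: 'k::comm_ring_1)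
           (tab_term a ((P @ q # R1) # (Q @ p # R2) # ws))"
proof -
  have "cong_mod par (higher_terms N r) (tab_term a ([] @ ([] @ q # P @ R1) # (p # Q @ R2) # ws))
      (parity_sign (par q \<and> list_par par P) :: 'k) (tab_term a ([] @ ([] @ P @ q # R1) # (p # Q @ R2) # ws))"
    by (rule tab_term_move_letter) (use assms in simp_all)
  moreover have "N = tlen (tab_term a ([P @ q # R1] @ ([] @ p # Q @ R2) # ws))"
    unfolding assms(4) using assms(1-3) by (intro tlen_tab_term_eq) auto
  then have "cong_mod par (higher_terms N r) (tab_term a ([P @ q # R1] @ ([] @ p # Q @ R2) # ws))
      (parity_sign (par p \<and> list_par par Q) :: 'k) (tab_term a ([P @ q # R1] @ ([] @ Q @ p # R2) # ws))"
    by (rule tab_term_move_letter[rotated 3]) (use assms in simp_all)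
  ultimately show ?thesis
    using cong_mod_trans by (fastforce simp: parity_sign_mult)
qed

lemma tab_term_exchange_blocks:
  assumes "[] \<notin> set ws" "r = Suc (Suc (length ws))"
  shows "R1 \<noteq> [] \<Longrightarrow> R2 \<noteq> [] \<Longrightarrow> length P = length Q \<Longrightarrow> N = tlen (tab_term a ((P @ R1) # (Q @ R2) # ws))
    \<Longrightarrow> cong_mod par (higher_terms N r) (tab_term a ((P @ R1) # (Q @ R2) # ws))
          (parity_sign (exchange_sign par P Q R1) :: 'k::comm_ring_1) (tab_term a ((Q @ R1) # (P @ R2) # ws))"
proof (induction P arbitrary: Q R1 R2)
  case Nil
  then show ?case by (simp add: cong_mod_refl exchange_sign_def)
next
  case (Cons p P')
  obtain q Q' where Q: "Q = q # Q'" using Cons.prems(3) by (cases Q) auto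
  have tlen_eq: "N = tlen (tab_term a (u # v # ws))"
    if "u \<noteq> []" "v \<noteq> []" "length u + length v = length (p # P' @ R1) + length (Q @ R2)" for u v
    unfolding Cons.prems(4) using assms(1) Cons.prems(1,2) that by (intro tlen_tab_term_eq) auto
  have lengths: "length P' = length Q'" using Cons.prems(3) Q by simp
  have heads: "cong_mod par (higher_terms N r) (tab_term a ((p # P' @ R1) # (q # Q' @ R2) # ws))
      (parity_sign (exchange_sign par [p] [q] (P' @ R1)) :: 'k) (tab_term a ((q # P' @ R1) # (p # Q' @ R2) # ws))"
    by (rule tab_term_exchange_heads) (use assms Cons.prems Q tlen_eq in auto)
  have out: "cong_mod par (higher_terms N r) (tab_term a ((q # P' @ R1) # (p # Q' @ R2) # ws))
      (parity_sign ((par q \<and> list_par par P') \<noteq> (par p \<and> list_par par Q')) :: 'k)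
      (tab_term a ((P' @ q # R1) # (Q' @ p # R2) # ws))"
    by (rule tab_term_move_first_letters) (use assms Cons.prems Q tlen_eq in auto)
  have rest: "cong_mod par (higher_terms N r) (tab_term a ((P' @ q # R1) # (Q' @ p # R2) # ws))
      (parity_sign (exchange_sign par P' Q' (q # R1)) :: 'k) (tab_term a ((Q' @ q # R1) # (P' @ p # R2) # ws))"
    by (rule Cons.IH) (use lengths Cons.prems Q tlen_eq in auto)
  have out_inverse: "cong_mod par (higher_terms N r) (tab_term a ((q # Q' @ R1) # (p # P' @ R2) # ws))
      (parity_sign ((par q \<and> list_par par Q') \<noteq> (par p \<and> list_par par P')) :: 'k)
      (tab_term a ((Q' @ q # R1) # (P' @ p # R2) # ws))"
    by (rule tab_term_move_first_letters) (use assms Cons.prems Q lengths tlen_eq in auto)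
  from cong_mod_trans[OF cong_mod_trans[OF cong_mod_trans[OF heads out] rest]
      cong_mod_sym[OF out_inverse parity_sign_mult_self]]
  show ?case
    unfolding Q by (simp add: parity_sign_mult exchange_sign_def)
      (cases "par p"; cases "par q"; cases "list_par par P'"; cases "list_par par Q'"; cases "list_par par R1"; simp)
qed

subsection \<open>Terms with a repeated odd letter\<close>

lemma tab_term_repeated_head_in_span:
  assumes "(2::'k::field) \<noteq> 0" "par x" "[] \<notin> set ws" "s \<noteq> []"
    and "N = tlen (tab_term x ((x # s) # ws))" "r = Suc (length ws)"
  shows "in_span par (higher_terms N r) [(1::'k, tab_term x ((x # s) # ws))]"
proof (rule cong_mod_neg_self_in_span[OF _ assms(1)])
  show "cong_mod par (higher_terms N r) (tab_term x ((x # s) # ws)) (-1::'k) (tab_term x ((x # s) # ws))"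
    using tab_term_swap_head[OF assms(3-6), of par] assms(2) by simp
qed

text \<open>Exchanging the chain parts of two rows with the same odd last letter and then swapping the
  rows back produces the sign $-1$.\<close>

lemma tab_term_repeated_last_in_span:
  assumes "(2::'k::field) \<noteq> 0" "par c" "[] \<notin> set ws" "length P = length Q"
    and "N = tlen (tab_term a ((P @ [c]) # (Q @ [c]) # ws))" "r = Suc (Suc (length ws))"
  shows "in_span par (higher_terms N r) [(1::'k, tab_term a ((P @ [c]) # (Q @ [c]) # ws))]"
proof (rule cong_mod_neg_self_in_span[OF _ assms(1)])
  have "cong_mod par (higher_terms N r) (tab_term a ((P @ [c]) # (Q @ [c]) # ws))
      (parity_sign (exchange_sign par P Q [c]) :: 'k) (tab_term a ((Q @ [c]) # (P @ [c]) # ws))"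
    using assms(3-6) by (intro tab_term_exchange_blocks) auto
  moreover have "cong_mod par (higher_terms N r) (tab_term a ([] @ (Q @ [c]) # (P @ [c]) # ws))
      (parity_sign (list_par par (Q @ [c]) \<and> list_par par (P @ [c])) :: 'k) (tab_term a ([] @ (P @ [c]) # (Q @ [c]) # ws))"
    by (rule tab_term_swap_rows) simp_all
  ultimately have "cong_mod par (higher_terms N r) (tab_term a ((P @ [c]) # (Q @ [c]) # ws))
      (parity_sign (exchange_sign par P Q [c]) * parity_sign (list_par par (Q @ [c]) \<and> list_par par (P @ [c])) :: 'k)
      (tab_term a ((P @ [c]) # (Q @ [c]) # ws))"
    by (simp only: append_Nil) (rule cong_mod_trans)
  then show "cong_mod par (higher_terms N r) (tab_term a ((P @ [c]) # (Q @ [c]) # ws)) (-1::'k)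
      (tab_term a ((P @ [c]) # (Q @ [c]) # ws))"
    using assms(2) by (simp add: parity_sign_mult exchange_sign_def)
      (cases "list_par par P"; cases "list_par par Q"; simp)
qed

lemma chain_term_repeated_in_span:
  assumes "(2::'k::field) \<noteq> 0" "par x" "2 \<le> count (mset c) x"
    and "[] \<notin> set (w # ws)" "2 \<le> length w" "length c = Suc (length (row_chain (w # ws)))"
    and "N = tlen (tab_term y (w # ws))" "r = Suc (length ws)"
  shows "in_span par (higher_terms N r) [(1::'k, chain_term c (w # ws))]"
proof -
  let ?rest = "remove1 x (remove1 x c)"
  have mset_c: "mset c = mset (x # x # ?rest)"
    using assms(3) by (simp add: multiset_eq_iff)
  then have perm: "cong_pm par (higher_terms N r) (chain_term c (w # ws)) (chain_term (x # x # ?rest) (w # ws)) TYPE('k)"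
    using assms(4,6-8) by (intro chain_term_perm) auto
  obtain m where m: "length w = Suc (Suc m)" using assms(5) by (metis add_2_eq_Suc le_Suc_ex)
  let ?s = "take m ?rest @ [last w]" and ?ws = "refill (drop m ?rest) ws"
  have chain_term_eq: "chain_term (x # x # ?rest) (w # ws) = tab_term x ((x # ?s) # ?ws)"
    by (simp add: chain_term_def m)
  have length_rest: "length (drop m ?rest) = length (row_chain ws)"
    using assms(6) mset_eq_length[OF mset_c] m by simp
  have "in_span par (higher_terms N r) [(1::'k, tab_term x ((x # ?s) # ?ws))]"
  proof (rule tab_term_repeated_head_in_span[where par = par and x = x, OF assms(1,2)])
    show "[] \<notin> set ?ws" using refill_spec[OF _ length_rest] assms(4) by simp
    show "N = tlen (tab_term x ((x # ?s) # ?ws))"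
      using tlen_chain_term[OF assms(4), of "x # x # ?rest" y] assms(6,7) mset_eq_length[OF mset_c] chain_term_eq by simp
  qed (use assms(8) in simp_all)
  then show ?thesis
    unfolding chain_term_eq[symmetric] by (rule cong_pm_in_span[OF perm _ subset_refl])
qed

lemma tab_term_adjacent_rows_in_span:
  assumes "(2::'k::field) \<noteq> 0" "[] \<notin> set ws" "Suc i < length ws"
    and "length (ws ! i) = length (ws ! Suc i)" "last (ws ! i) = last (ws ! Suc i)" "par (last (ws ! i))"
    and "N = tlen (tab_term a ws)" "r = length ws"
  shows "in_span par (higher_terms N r) [(1::'k, tab_term a ws)]"
proof -
  let ?u = "ws ! i" and ?v = "ws ! Suc i" and ?c = "last (ws ! i)"
  let ?rest = "take i ws @ drop (Suc (Suc i)) ws"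
  have ws: "ws = take i ws @ ?u # ?v # drop (Suc (Suc i)) ws"
    using assms(3) by (metis Cons_nth_drop_Suc Suc_lessD append_take_drop_id)
  then have mset_ws: "mset ws = mset (?u # ?v # ?rest)"
    by (metis mset.simps(2) mset_append union_mset_add_mset_right)
  have "?u \<in> set ws" "?v \<in> set ws"
    using assms(3) by simp_all
  then have nonempty: "?u \<noteq> []" "?v \<noteq> []" "[] \<notin> set ?rest"
    using assms(2) by (auto dest: in_set_takeD in_set_dropD)
  have rows: "?u = butlast ?u @ [?c]" "?v = butlast ?v @ [?c]"
    using nonempty(1,2) assms(5) by (metis append_butlast_last_id)+
  have perm: "cong_pm par (higher_terms N r) (tab_term a ([] @ ws)) (tab_term a ([] @ ?u # ?v # ?rest)) TYPE('k)"
    by (rule tab_term_perm_rows) (use assms(2) mset_ws in simp_all)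
  have "in_span par (higher_terms N r) [(1::'k, tab_term a ((butlast ?u @ [?c]) # (butlast ?v @ [?c]) # ?rest))]"
  proof (rule tab_term_repeated_last_in_span[where par = par and c = ?c, OF assms(1,6) nonempty(3)])
    show "N = tlen (tab_term a ((butlast ?u @ [?c]) # (butlast ?v @ [?c]) # ?rest))"
      unfolding assms(7) rows[symmetric] using assms(2) nonempty
      by (intro tlen_tab_term_eq) (auto simp: sum_length_mset_eq[OF mset_ws])
  qed (use assms(3,4,8) in simp_all)
  then have "in_span par (higher_terms N r) [(1::'k, tab_term a (?u # ?v # ?rest))]"
    by (simp only: rows[symmetric])
  then show ?thesis
    using cong_pm_in_span[OF perm[unfolded append_Nil] _ subset_refl] by blast
qed

definition row_key :: "'x list \<Rightarrow> nat \<times> 'x" where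
  "row_key w = (length w, last w)"

lemma row_key_le_iff:
  "row_key v \<le> row_key w \<longleftrightarrow> length v < length w \<or> length v = length w \<and> last v \<le> last w"
  by (auto simp: row_key_def less_eq_prod_def)

lemma is_tableau_tab_termI:
  fixes par :: "'x::linorder \<Rightarrow> bool"
  assumes "[] \<notin> set ws"
    and keys: "sorted_wrt (\<ge>) (map row_key ws)"
    and chain: "sorted_wrt (\<ge>) (a # row_chain ws)"
    and odd_letters: "\<And>x. par x \<Longrightarrow> count (mset (a # row_chain ws)) x < 2"
    and odd_lasts: "\<And>i. Suc i < length ws \<Longrightarrow> length (ws ! i) = length (ws ! Suc i) \<Longrightarrow> par (last (ws ! i))
      \<Longrightarrow> last (ws ! i) \<noteq> last (ws ! Suc i)"
  shows "is_tableau par (tab_term a ws)"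
  unfolding is_tableau_def Let_def
proof (intro exI[of _ a] exI[of _ ws] conjI allI impI)
  fix i assume "Suc i < length ws"
  then have "row_key (ws ! Suc i) \<le> row_key (ws ! i)"
    using keys by (auto simp: sorted_wrt_iff_nth_less)
  then show "length (ws ! Suc i) \<le> length (ws ! i)"
    and "length (ws ! i) = length (ws ! Suc i) \<Longrightarrow> last (ws ! Suc i) \<le> last (ws ! i)"
    by (auto simp: row_key_le_iff)
next
  let ?c = "a # concat (map butlast ws)"
  fix i j assume "i < length ?c" "j < length ?c" "i \<noteq> j" "par (?c ! i)"
  then show "?c ! i \<noteq> ?c ! j"
    using odd_letters[unfolded row_chain_def] by (metis nth_neq_if_count_less_2)
next
  fix i assume "i < length ws"
  then show "ws ! i \<noteq> []" using assms(1) nth_mem by metis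
next
  fix j assume "Suc j < length (a # concat (map butlast ws))"
  then show "(a # concat (map butlast ws)) ! Suc j \<le> (a # concat (map butlast ws)) ! j"
    using sorted_wrt_nth_less[OF chain[unfolded row_chain_def], of j "Suc j"] by simp
qed (use odd_lasts in \<open>simp_all add: tab_term_def\<close>)

subsection \<open>Spanning by supertableaux\<close>

definition tableaux_ge :: "('x::linorder \<Rightarrow> bool) \<Rightarrow> nat \<Rightarrow> nat \<Rightarrow> 'x gterm set" where
  "tableaux_ge par N r = {\<mu> \<in> Tab par. tlen \<mu> = N \<and> r \<le> root \<mu>}"

lemma chain_term_sorted_in_span_tableaux:
  fixes par :: "'x::linorder \<Rightarrow> bool"
  assumes "(2::'k::field) \<noteq> 0" "[] \<notin> set ws" "sorted_wrt (\<ge>) (map row_key ws)"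
    and "length d = Suc (length (row_chain ws))" "sorted_wrt (\<ge>) d" "\<And>x. par x \<Longrightarrow> count (mset d) x < 2"
    and "N = tlen (tab_term x ws)" "r = length ws"
  shows "in_span par (higher_terms N r \<union> tableaux_ge par N r) [(1::'k, chain_term d ws)]"
proof -
  let ?ws = "refill (tl d) ws"
  have "length (tl d) = length (row_chain ws)" using assms(4) by simp
  note refill = refill_spec[OF assms(2) this]
  have d: "d = hd d # row_chain ?ws" using refill assms(4) by (cases d) auto
  have "map row_key xs = zip (map length xs) (map last xs)" for xs :: "'x list list"
    by (induction xs) (simp_all add: row_key_def)
  then have shape: "map row_key ?ws = map row_key ws"
    using refill by simp
  have N: "N = tlen (tab_term (hd d) ?ws)" and r: "r = length ?ws"
    using tlen_chain_term[OF assms(2,4), of x] assms(7,8) by (simp_all add: chain_term_def)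
  show ?thesis
  proof (cases "\<exists>i. Suc i < length ?ws \<and> length (?ws ! i) = length (?ws ! Suc i)
      \<and> last (?ws ! i) = last (?ws ! Suc i) \<and> par (last (?ws ! i))")
    case True
    then obtain i where "Suc i < length ?ws" "length (?ws ! i) = length (?ws ! Suc i)"
      "last (?ws ! i) = last (?ws ! Suc i)" "par (last (?ws ! i))" by blast
    from tab_term_adjacent_rows_in_span[where par = par, OF assms(1) _ this N r] show ?thesis
      using refill by (auto simp: chain_term_def intro: in_span_mono)
  next
    case False
    have "is_tableau par (tab_term (hd d) ?ws)"
      using refill False assms(3,5,6) shape d by (intro is_tableau_tab_termI) (auto simp: d[symmetric])
    then have "chain_term d ws \<in> tableaux_ge par N r"
      using refill N r by (simp add: chain_term_def tableaux_ge_def Tab_def root_tab_term)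
    then show ?thesis by (intro in_span_base) simp
  qed
qed

lemma length_first_row_ge_2:
  assumes "sorted_wrt (\<ge>) (map row_key (w # ws))" "row_chain (w # ws) \<noteq> []"
  shows "2 \<le> length w"
proof -
  obtain u where "u \<in> set (w # ws)" "butlast u \<noteq> []"
    using assms(2) by (auto simp: row_chain_def)
  then have u: "u \<in> set (w # ws)" "2 \<le> length u"
    by (simp_all add: Suc_le_eq flip: length_greater_0_conv)
  show ?thesis
  proof (cases "u = w")
    case False
    then have "row_key u \<le> row_key w" using assms(1) u(1) by simp
    then show ?thesis using u(2) by (auto simp: row_key_le_iff)
  qed (use u in simp)
qed

lemma chain_term_in_span_tableaux:
  fixes par :: "'x::linorder \<Rightarrow> bool"
  assumes "(2::'k::field) \<noteq> 0" "[] \<notin> set ws" "sorted_wrt (\<ge>) (map row_key ws)"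
    and "length c = Suc (length (row_chain ws))" "N = tlen (tab_term x ws)" "r = length ws"
  shows "in_span par (higher_terms N r \<union> tableaux_ge par N r) [(1::'k, chain_term c ws)]"
proof (cases "\<exists>y. par y \<and> 2 \<le> count (mset c) y")
  case True
  then obtain y where y: "par y" "2 \<le> count (mset c) y" by blast
  then have "row_chain ws \<noteq> []"
    using assms(4) count_le_size[of "mset c" y] by auto
  then obtain w ws' where ws: "ws = w # ws'" by (cases ws) auto
  have "2 \<le> length w"
    using length_first_row_ge_2 assms(3) \<open>row_chain ws \<noteq> []\<close> ws by blast
  have "in_span par (higher_terms N r) [(1::'k, chain_term c ws)]"
    unfolding ws by (rule chain_term_repeated_in_span[where par = par and x = y, OF assms(1) y])
      (use assms ws \<open>2 \<le> length w\<close> in simp_all)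
  then show ?thesis by (rule in_span_mono) simp
next
  case False
  let ?d = "rev (sort c)"
  have "cong_pm par (higher_terms N r) (chain_term c ws) (chain_term ?d ws) TYPE('k)"
    using assms(2,4-6) by (intro chain_term_perm) simp_all
  moreover have "in_span par (higher_terms N r \<union> tableaux_ge par N r) [(1::'k, chain_term ?d ws)]"
    using False assms by (intro chain_term_sorted_in_span_tableaux) (auto simp: sorted_wrt_rev not_le)
  ultimately show ?thesis by (rule cong_pm_in_span) simp
qed

lemma tab_term_in_span_tableaux:
  fixes par :: "'x::linorder \<Rightarrow> bool"
  assumes "(2::'k::field) \<noteq> 0" "[] \<notin> set ws" "r \<le> length ws" "tlen (tab_term a ws) = N"
  shows "in_span par (higher_terms N r \<union> tableaux_ge par N r) [(1::'k, tab_term a ws)]"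
proof (cases "r < length ws")
  case True
  then have "tab_term a ws \<in> higher_terms N r"
    using assms(2,4) by (simp add: higher_terms_def root_tab_term)
  then show ?thesis by (intro in_span_base) simp
next
  case False
  let ?ws = "rev (sort_key row_key ws)"
  have mset_ws: "mset ws = mset ?ws" and nonempty: "[] \<notin> set ?ws"
    using assms(2) by simp_all
  have perm: "cong_pm par (higher_terms N r) (tab_term a ([] @ ws)) (tab_term a ([] @ ?ws)) TYPE('k)"
    by (rule tab_term_perm_rows) (use assms(2) mset_ws in simp_all)
  have "in_span par (higher_terms N r \<union> tableaux_ge par N r) [(1::'k, chain_term (a # row_chain ?ws) ?ws)]"
  proof (rule chain_term_in_span_tableaux[OF assms(1) nonempty])
    have "map row_key ?ws = rev (map row_key (sort_key row_key ws))"
      by (simp add: rev_map)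
    then show "sorted_wrt (\<ge>) (map row_key ?ws)"
      by (simp only: sorted_wrt_rev sorted_sort_key flip: sorted_wrt_map)
    show "N = tlen (tab_term a ?ws)"
      using assms(2,4) nonempty sum_length_mset_eq[OF mset_ws] by (simp add: tlen_tab_term)
  qed (use False assms(3) in simp_all)
  then show ?thesis
    using cong_pm_in_span[OF perm[unfolded append_Nil]] chain_term_row_chain[OF nonempty] by auto
qed

lemma tableau_tab_term:
  assumes "\<mu> \<in> Tab par"
  obtains a ws where "\<mu> = tab_term a ws" "[] \<notin> set ws"
proof -
  obtain a ws where "\<mu> = lnest a (map rnest ws)" "\<forall>i < length ws. ws ! i \<noteq> []"
    using assms unfolding Tab_def is_tableau_def by blast
  moreover have "[] \<notin> set ws"
    using calculation(2) by (auto simp: in_set_conv_nth)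
  ultimately show ?thesis using that by (simp add: tab_term_def)
qed

lemma Mul_rnest_in_span_tableaux:
  fixes par :: "'x::linorder \<Rightarrow> bool"
  assumes "(2::'k::field) \<noteq> 0" "in_span par (tableaux_ge par M \<rho>) [(1::'k, u)]"
    and "s \<noteq> []" "M + length s = N" "r \<le> Suc \<rho>"
  shows "in_span par (higher_terms N r \<union> tableaux_ge par N r) [(1::'k, Mul u (rnest s))]"
proof (rule in_span_ctx[OF mul_ctx_right[OF mul_ctx_id] assms(2)])
  fix \<tau> assume "\<tau> \<in> tableaux_ge par M \<rho>"
  then obtain c zs where \<tau>: "\<tau> = tab_term c zs" "[] \<notin> set zs" "tlen \<tau> = M" "\<rho> \<le> root \<tau>"
    by (auto simp: tableaux_ge_def elim: tableau_tab_term)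
  have "in_span par (higher_terms N r \<union> tableaux_ge par N r) [(1::'k, tab_term c (zs @ [s]))]"
    using \<tau> assms(3-5) by (intro tab_term_in_span_tableaux[OF assms(1)])
      (auto simp: root_tab_term tab_term_snoc tlen_rnest)
  then show "in_span par (higher_terms N r \<union> tableaux_ge par N r) [(1::'k, Mul \<tau> (rnest s))]"
    using \<tau>(1) by (simp add: tab_term_snoc)
qed

lemma Mul_snoc_in_span_tableaux:
  fixes par :: "'x::linorder \<Rightarrow> bool"
  assumes "(2::'k::field) \<noteq> 0"
    and IH: "\<And>u. tlen u < N \<Longrightarrow> in_span par (tableaux_ge par (tlen u) (root u)) [(1::'k, u)]"
    and "[] \<notin> set xs" "\<mu> \<noteq> []"
    and "tlen (Mul (tab_term a (xs @ [\<mu>])) y) = N" "r \<le> root (Mul (tab_term a (xs @ [\<mu>])) y)"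
  shows "in_span par (higher_terms N r \<union> tableaux_ge par N r) [(1::'k, Mul (tab_term a (xs @ [\<mu>])) y)]"
proof -
  let ?x = "tab_term a xs" and ?m = "rnest \<mu>"
  have "gdn_rel par [(1::'k, Mul (Mul ?x ?m) y), (- sgn2 par ?m y, Mul (Mul ?x y) ?m)]"
    by (rule gdn_rel.ident2)
  then have swap: "cong_mod par {} (Mul (Mul ?x ?m) y) (sgn2 par ?m y :: 'k) (Mul (Mul ?x y) ?m)"
    by (rule cong_mod_of_rel[where R = "[]"]) simp_all
  have "tlen (Mul ?x y) < N"
    using assms(4,5) tlen_pos[of ?m] by (simp add: tab_term_snoc)
  moreover have "r \<le> Suc (root (Mul ?x y))"
    using assms(3,4,6) root_rnest_le1[of \<mu>] by (simp add: tab_term_snoc root_Mul max_def)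
  ultimately have "in_span par (higher_terms N r \<union> tableaux_ge par N r) [(1::'k, Mul (Mul ?x y) ?m)]"
    using assms(4,5) by (intro Mul_rnest_in_span_tableaux[OF assms(1) IH]) (simp_all add: tab_term_snoc tlen_rnest)
  then show ?thesis
    unfolding tab_term_snoc by (rule cong_mod_in_span[OF swap]) simp
qed

lemma Letter_Mul_in_span_tableaux:
  fixes par :: "'x::linorder \<Rightarrow> bool"
  assumes "(2::'k::field) \<noteq> 0"
    and IH: "\<And>u. tlen u < N \<Longrightarrow> in_span par (tableaux_ge par (tlen u) (root u)) [(1::'k, u)]"
    and "[] \<notin> set ys" "s \<noteq> []"
    and "tlen (Mul (Letter a) (tab_term b (ys @ [s]))) = N" "r \<le> Suc (length ys)"
  shows "in_span par (higher_terms N r \<union> tableaux_ge par N r) [(1::'k, Mul (Letter a) (tab_term b (ys @ [s])))]"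
proof -
  let ?H = "higher_terms N r \<union> tableaux_ge par N r"
  let ?w = "tab_term b ys" and ?z = "rnest s" and ?sg = "sgn2 par (Letter a) (tab_term b ys) :: 'k"
  have rel: "gdn_rel par [(1::'k, Mul (Letter a) (Mul ?w ?z)), (-1, Mul (Mul (Letter a) ?w) ?z),
      (- ?sg, Mul ?w (Mul (Letter a) ?z)), (?sg, Mul (Mul ?w (Letter a)) ?z)]"
    by (rule gdn_rel.ident1)
  have N: "N = Suc (tlen ?w + length s)"
    using assms(4,5) by (simp add: tab_term_snoc tlen_rnest)
  have left: "in_span par ?H [(1::'k, Mul (Mul (Letter a) ?w) ?z)]"
  proof (rule Mul_rnest_in_span_tableaux[OF assms(1) IH])
    show "r \<le> Suc (root (Mul (Letter a) ?w))"
      using assms(3,6) by (simp add: root_Mul root_tab_term)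
  qed (use assms(4) in \<open>simp_all add: N flip: length_greater_0_conv\<close>)
  have "in_span par ?H [(1::'k, tab_term b (ys @ [a # s]))]"
    using assms(3,4,6) N by (intro tab_term_in_span_tableaux[OF assms(1)]) (simp_all add: tab_term_snoc tlen_rnest)
  then have middle: "in_span par ?H [(1::'k, Mul ?w (Mul (Letter a) ?z))]"
    using assms(4) by (simp add: tab_term_snoc rnest_Cons)
  have "in_span par ?H [(1::'k, tab_term b ((ys @ [[a]]) @ [s]))]"
    using assms(3,4,6) N by (intro tab_term_in_span_tableaux[OF assms(1)]) (simp_all add: tlen_tab_term)
  then have right: "in_span par ?H [(1::'k, Mul (Mul ?w (Letter a)) ?z)]"
    by (simp only: tab_term_snoc rnest.simps)
  have "in_span par ?H [(-1::'k, Mul (Mul (Letter a) ?w) ?z), (- ?sg, Mul ?w (Mul (Letter a) ?z)),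
      (?sg, Mul (Mul ?w (Letter a)) ?z)]"
    using in_span_Cons[OF in_span_single[OF left] in_span_Cons[OF in_span_single[OF middle] in_span_single[OF right]]] .
  then show ?thesis
    unfolding tab_term_snoc by (rule in_span_solve[OF rel, rotated]) simp
qed

lemma Mul_tableaux_in_span_tableaux:
  fixes par :: "'x::linorder \<Rightarrow> bool"
  assumes "(2::'k::field) \<noteq> 0"
    and IH: "\<And>u. tlen u < N \<Longrightarrow> in_span par (tableaux_ge par (tlen u) (root u)) [(1::'k, u)]"
    and "x \<in> Tab par" "y \<in> Tab par" "tlen (Mul x y) = N" "r \<le> root (Mul x y)"
  shows "in_span par (higher_terms N r \<union> tableaux_ge par N r) [(1::'k, Mul x y)]"
proof -
  obtain a xs where x: "x = tab_term a xs" "[] \<notin> set xs" using assms(3) by (rule tableau_tab_term)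
  obtain b ys where y: "y = tab_term b ys" "[] \<notin> set ys" using assms(4) by (rule tableau_tab_term)
  consider "ys = []" | xs' \<mu> where "ys \<noteq> []" "xs = xs' @ [\<mu>]" | ys' s where "xs = []" "ys = ys' @ [s]"
    by (metis rev_exhaust)
  then show ?thesis
  proof cases
    case 1
    then have "Mul x y = tab_term a (xs @ [[b]])"
      using x y by (simp add: tab_term_snoc tab_term_Nil)
    then show ?thesis
      using assms(5,6) x 1 y by (simp add: tab_term_in_span_tableaux[OF assms(1)] root_Mul root_tab_term tab_term_Nil)
  next
    case 2
    then have "[] \<notin> set xs'" "\<mu> \<noteq> []" using x(2) by auto
    then show ?thesis
      using assms(5,6) unfolding x(1) 2(2) by (intro Mul_snoc_in_span_tableaux[OF assms(1) IH])
  next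
    case 3
    have "r \<le> Suc (length ys')"
      using assms(6) x y 3 by (simp add: root_Mul root_tab_term tab_term_Nil)
    then show ?thesis
      unfolding x(1) y(1) 3 tab_term_Nil
      by (intro Letter_Mul_in_span_tableaux[OF assms(1) IH]) (use assms(5) x y 3 in \<open>auto simp: tab_term_Nil\<close>)
  qed
qed

lemma Mul_in_span_tableaux:
  fixes par :: "'x::linorder \<Rightarrow> bool"
  assumes "(2::'k::field) \<noteq> 0"
    and IH: "\<And>w. tlen w < N \<Longrightarrow> in_span par (tableaux_ge par (tlen w) (root w)) [(1::'k, w)]"
    and "tlen (Mul u v) = N" "r \<le> root (Mul u v)"
  shows "in_span par (higher_terms N r \<union> tableaux_ge par N r) [(1::'k, Mul u v)]"
proof (rule in_span_ctx[OF mul_ctx_right[OF mul_ctx_id] IH])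
  fix x assume x: "x \<in> tableaux_ge par (tlen u) (root u)"
  show "in_span par (higher_terms N r \<union> tableaux_ge par N r) [(1::'k, Mul x v)]"
  proof (rule in_span_ctx[OF mul_ctx_left[OF mul_ctx_id] IH])
    fix y assume "y \<in> tableaux_ge par (tlen v) (root v)"
    with x assms(3,4) show "in_span par (higher_terms N r \<union> tableaux_ge par N r) [(1::'k, Mul x y)]"
      by (intro Mul_tableaux_in_span_tableaux[OF assms(1) IH])
        (auto simp: tableaux_ge_def root_Mul intro: add_mono max.mono)
  qed (use assms(3) tlen_pos[of u] in simp)
qed (use assms(3) tlen_pos[of v] in simp)

lemma Letter_in_Tab: "Letter a \<in> Tab par"
  unfolding Tab_def is_tableau_def by (intro CollectI exI[of _ a] exI[of _ "[]"]) (simp add: lnest_def)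

theorem term_in_span_tableaux:
  fixes par :: "'x::linorder \<Rightarrow> bool" and t :: "'x gterm"
  assumes "(2::'k::field) \<noteq> 0"
  shows "in_span par (tableaux_ge par (tlen t) (root t)) [(1::'k, t)]"
proof (induction t rule: wf_induct[OF wf_measures[of "[tlen, \<lambda>t. tlen t - root t]"]])
  case (1 t)
  define N r where "N = tlen t" and "r = root t"
  have shorter: "in_span par (tableaux_ge par (tlen u) (root u)) [(1::'k, u)]" if "tlen u < N" for u
    using 1 that by (simp add: in_measures N_def)
  have higher: "in_span par (tableaux_ge par N r) [(1::'k, u)]" if "u \<in> higher_terms N r" for u
  proof -
    have "tlen u - root u < N - r"
      using that root_less_tlen[of u] by (auto simp: higher_terms_def)
    then have "in_span par (tableaux_ge par N (root u)) [(1::'k, u)]"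
      using 1 that by (auto simp: in_measures higher_terms_def N_def r_def)
    then show ?thesis
      by (rule in_span_mono) (use that in \<open>auto simp: tableaux_ge_def higher_terms_def\<close>)
  qed
  have "in_span par (higher_terms N r \<union> tableaux_ge par N r) [(1::'k, t)]"
  proof (cases t)
    case (Letter a)
    then show ?thesis
      by (intro in_span_base) (simp add: Letter_in_Tab tableaux_ge_def N_def r_def)
  next
    case (Mul u v)
    show ?thesis
      unfolding Mul by (rule Mul_in_span_tableaux[OF assms shorter]) (simp_all add: Mul N_def r_def)
  qed
  then show ?case
    unfolding N_def[symmetric] r_def[symmetric]
    by (rule in_span_trans) (use higher in \<open>auto intro: in_span_base\<close>)
qed

theorem lemma2p10:
  fixes par :: "'x::wellorder \<Rightarrow> bool"
  assumes "(2::'k::field) \<noteq> 0"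
  shows "(\<forall>lam::'x gterm. \<exists>L::('k \<times> 'x gterm) list.
            (\<forall>(\<alpha>, \<mu>) \<in> set L. \<mu> \<in> Tab par \<and> tlen \<mu> = tlen lam \<and> root \<mu> \<ge> root lam)
            \<and> gdn_eq par [(1, lam)] L)
       \<and> (\<forall>f::('k \<times> 'x gterm) list. \<exists>L::('k \<times> 'x gterm) list.
            (\<forall>(\<alpha>, \<mu>) \<in> set L. \<mu> \<in> Tab par) \<and> gdn_eq par f L)"
proof (intro conjI allI)
  fix lam :: "'x gterm"
  obtain L :: "('k \<times> 'x gterm) list"
    where "snd ` set L \<subseteq> tableaux_ge par (tlen lam) (root lam)" "gdn_eq par [(1, lam)] L"
    using term_in_span_tableaux[OF assms, of par lam] unfolding in_span_def by blast
  then show "\<exists>L::('k \<times> 'x gterm) list.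
      (\<forall>(\<alpha>, \<mu>) \<in> set L. \<mu> \<in> Tab par \<and> tlen \<mu> = tlen lam \<and> root \<mu> \<ge> root lam) \<and> gdn_eq par [(1, lam)] L"
    by (intro exI[of _ L]) (auto simp: tableaux_ge_def)
next
  fix f :: "('k \<times> 'x gterm) list"
  have "in_span par (Tab par) f"
    by (rule in_span_combination) (use term_in_span_tableaux[OF assms] in \<open>auto intro: in_span_mono simp: tableaux_ge_def\<close>)
  then obtain L :: "('k \<times> 'x gterm) list" where "snd ` set L \<subseteq> Tab par" "gdn_eq par f L"
    unfolding in_span_def by blast
  then show "\<exists>L::('k \<times> 'x gterm) list. (\<forall>(\<alpha>, \<mu>) \<in> set L. \<mu> \<in> Tab par) \<and> gdn_eq par f L"
    by (intro exI[of _ L]) auto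
qed

end
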